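(* Let $(n,s,L)$ be a tree with $n\notin L$, and let $\{k_1<k_2<\dots<k_m\}=s^{-1}(n)$; put $k_0=0$. Then $k_m=n-1$. Moreover, putting $n_i=k_i-k_{i-1}$ for $i=1,\dots,m$, the triples $(n_i,s_i,L_i)$ are trees, where $s_i(j)=s(j+k_{i-1})-k_{i-1}$ for $j\in\{1,\dots,n_i-1\}$ and $L_i=\{x-k_{i-1}\mid x\in L\}\cap\{1,\dots,n_i\}$.
   Context: For $n\ge1$ write $\underline n=\{1,\dots,n\}$. A tree $(n,s,L)$ consists of a subset $L\subseteq\underline n$ (the leaves) and a map $s:\underline{n-1}\to\underline n\setminus L$ such that (1) $s(x)>x$ for all $x$, and (2) $x\le y<s(x)$ implies $s(y)\le s(x)$. *)

theory Defs
  imports Main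
begin

definition is_tree :: "nat \<Rightarrow> (nat \<Rightarrow> nat) \<Rightarrow> nat set \<Rightarrow> bool" where
  "is_tree n s L \<longleftrightarrow> n \<ge> 1 \<and> L \<subseteq> {1..n} \<and>
     (\<forall>x\<in>{1..n-1}. s x \<in> {1..n} - L) \<and>
     (\<forall>x\<in>{1..n-1}. s x > x) \<and>
     (\<forall>x\<in>{1..n-1}. \<forall>y\<in>{1..n-1}. x \<le> y \<and> y < s x \<longrightarrow> s y \<le> s x)"

end

theory Submission
  imports Defs
begin

text \<open>The vertex n-1 is always a child of the root n, and it is the largest one, whence
  k_m = n-1. If b is a child of the root and x < b is not, then s x \<le> b: otherwise
  x \<le> b < s x would force n = s b \<le> s x. So each block (k_(i-1), k_i] is closed under s,
  and a block of a tree that is closed under s is, after shifting, a tree itself.\<close>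

lemma is_tree_succ_last:
  assumes "is_tree n s L" "2 \<le> n"
  shows "s (n - 1) = n"
proof -
  have "n - 1 < s (n - 1)" "s (n - 1) \<le> n"
    using assms unfolding is_tree_def by auto
  then show ?thesis by simp
qed

lemma is_tree_succ_le_root_child:
  assumes "is_tree n s L" "b \<in> {1..n-1}" "s b = n"
    and "1 \<le> x" "x < b" "s x \<noteq> n"
  shows "s x \<le> b"
proof (rule ccontr)
  assume "\<not> s x \<le> b"
  then have "s b \<le> s x" "s x \<le> n"
    using assms unfolding is_tree_def by auto
  then show False using assms(3,6) by simp
qed

lemma is_tree_restrict_interval:
  assumes "is_tree n s L" "a < b" "b \<le> n"
    and closed: "\<And>x. a < x \<Longrightarrow> x < b \<Longrightarrow> s x \<le> b"
  shows "is_tree (b - a) (\<lambda>j. s (j + a) - a) ({x - a | x. x \<in> L} \<inter> {1..b - a})"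
proof -
  have in_range: "j + a \<in> {1..n-1}" if "j \<in> {1..b - a - 1}" for j
    using that assms(2,3) by auto
  have succ: "j < s (j + a) - a" "s (j + a) \<le> b" "s (j + a) \<notin> L"
    if "j \<in> {1..b - a - 1}" for j
  proof -
    have "j + a < s (j + a)" "s (j + a) \<notin> L"
      using in_range[OF that] assms(1) unfolding is_tree_def by auto
    then show "j < s (j + a) - a" "s (j + a) \<notin> L" by simp_all
    show "s (j + a) \<le> b" using that assms(2) by (intro closed) auto
  qed
  have not_shifted_leaf: "s (j + a) - a \<notin> {x - a | x. x \<in> L}" if "j \<in> {1..b - a - 1}" for j
  proof
    assume "s (j + a) - a \<in> {x - a | x. x \<in> L}"
    then obtain y where "y \<in> L" "s (j + a) - a = y - a" by auto
    moreover have "0 < s (j + a) - a" using succ(1)[OF that] by simp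
    ultimately have "y = s (j + a)" by simp
    with \<open>y \<in> L\<close> succ(3)[OF that] show False by simp
  qed
  have nested: "s (j' + a) - a \<le> s (j + a) - a"
    if "j \<in> {1..b - a - 1}" "j' \<in> {1..b - a - 1}" "j \<le> j'" "j' < s (j + a) - a" for j j'
    using that in_range[OF that(1)] in_range[OF that(2)] assms(1)
    unfolding is_tree_def by (metis add_le_mono1 diff_le_mono less_diff_conv)
  show ?thesis
    unfolding is_tree_def
  proof (intro conjI ballI impI)
    show "1 \<le> b - a" using assms(2) by simp
    show "{x - a | x. x \<in> L} \<inter> {1..b - a} \<subseteq> {1..b - a}" by blast
  next
    fix j assume j: "j \<in> {1..b - a - 1}"
    then show "s (j + a) - a \<in> {1..b - a} - {x - a | x. x \<in> L} \<inter> {1..b - a}"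
      using succ(1,2)[OF j] not_shifted_leaf[OF j] by simp
    show "j < s (j + a) - a" using succ(1)[OF j] .
  next
    fix j j' assume "j \<in> {1..b - a - 1}" "j' \<in> {1..b - a - 1}" "j \<le> j' \<and> j' < s (j + a) - a"
    then show "s (j' + a) - a \<le> s (j + a) - a" using nested by blast
  qed
qed

lemma sorted_wrt_less_nth_gap:
  fixes xs :: "'a::linorder list"
  assumes "sorted_wrt (<) xs" "Suc i < length xs" "xs ! i < y" "y < xs ! Suc i"
  shows "y \<notin> set xs"
proof
  assume "y \<in> set xs"
  then obtain p where p: "p < length xs" "xs ! p = y" by (auto simp: in_set_conv_nth)
  have "xs ! p \<le> xs ! i" if "p \<le> i"
    using that assms(2) p sorted_wrt_nth_less[OF assms(1), of p i] by (cases "p = i") auto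
  moreover have "xs ! Suc i \<le> xs ! p" if "Suc i \<le> p"
    using that p sorted_wrt_nth_less[OF assms(1), of "Suc i" p] by (cases "p = Suc i") auto
  moreover consider "p \<le> i" | "Suc i \<le> p" by linarith
  ultimately show False using assms(3,4) p(2) by (metis leD order.strict_trans1 order.strict_trans2)
qed

lemma sorted_le_last:
  assumes "sorted xs" "x \<in> set xs"
  shows "x \<le> last xs"
  using assms by (induction xs) (auto simp: last_in_set)

theorem lemma3:
  fixes n :: nat and s :: "nat \<Rightarrow> nat" and L :: "nat set" and ks :: "nat list"
  assumes "is_tree n s L"
    and "n \<notin> L"
    and "sorted_wrt (<) ks"
    and "set ks = {x \<in> {1..n-1}. s x = n}"
  shows "(0 # ks) ! length ks = n - 1
    \<and> (\<forall>i\<in>{1..length ks}.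
         is_tree ((0 # ks) ! i - (0 # ks) ! (i - 1))
                 (\<lambda>j. s (j + (0 # ks) ! (i - 1)) - (0 # ks) ! (i - 1))
                 ({x - (0 # ks) ! (i - 1) | x. x \<in> L} \<inter> {1..(0 # ks) ! i - (0 # ks) ! (i - 1)}))"
proof -
  define K where "K = 0 # ks"
  have sorted_K: "sorted_wrt (<) K"
    unfolding K_def using assms(3,4) by auto
  have last_block: "K ! length ks = n - 1"
  proof (cases "n \<ge> 2")
    case True
    then have "n - 1 \<in> set ks" using assms(4) is_tree_succ_last[OF assms(1)] by auto
    then have "n - 1 \<le> last ks" "last ks \<in> set ks"
      using sorted_le_last strict_sorted_imp_sorted[OF assms(3)] last_in_set by (metis empty_iff list.set(1))+
    then show ?thesis using assms(4) by (auto simp: K_def last_conv_nth nth_Cons')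
  qed (use assms(4) K_def in auto)
  have "is_tree (K ! i - K ! (i - 1)) (\<lambda>j. s (j + K ! (i - 1)) - K ! (i - 1))
          ({x - K ! (i - 1) | x. x \<in> L} \<inter> {1..K ! i - K ! (i - 1)})"
    if i: "i \<in> {1..length ks}" for i
  proof (rule is_tree_restrict_interval[OF assms(1)])
    have "K ! i \<in> set ks" using i by (auto simp: K_def)
    then have root_child: "K ! i \<in> {1..n-1}" "s (K ! i) = n" using assms(4) by auto
    then show "K ! i \<le> n" by auto
    show "K ! (i - 1) < K ! i"
      using i sorted_wrt_nth_less[OF sorted_K] by (simp add: K_def)
    fix x assume x: "K ! (i - 1) < x" "x < K ! i"
    then have "x \<notin> set K"
      using i sorted_wrt_less_nth_gap[OF sorted_K, of "i - 1" x] by (simp add: K_def)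
    then have "s x \<noteq> n" using x root_child assms(4) by (auto simp: K_def)
    then show "s x \<le> K ! i"
      using is_tree_succ_le_root_child[OF assms(1) root_child] x by simp
  qed
  with last_block show ?thesis unfolding K_def by blast
qed

end
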